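(* Let $H\in\mathbb{C}^{n\times n}$ be PT-symmetric, i.e., suppose there exists a matrix $P\in\mathbb{C}^{n\times n}$ with $P^{2}=I$ such that $P\bar H - HP = 0$. Then $H$ is pseudo-Hermitian. No diagonalizability assumption on $H$ is required.
   Context: For a matrix $M$, $\bar M$ denotes the entrywise complex conjugate and $M^{\dagger}$ its conjugate transpose; $I$ is the $n\times n$ identity. A matrix $H\in\mathbb{C}^{n\times n}$ is called PT-symmetric if it commutes with $PT$, where $P$ is a linear operator (matrix) with $P^2=I$ and $T$ is complex conjugation; in matrix form this is $P\bar H - HP = 0$. A matrix $H$ is called pseudo-Hermitian if there exists a non-singular Hermitian matrix $G\in\mathbb{C}^{n\times n}$ such that $H^{\dagger}G - GH = 0$. *)

theory Defs
  imports "HOL-Analysis.Analysis"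
begin

text \<open>n x n complex matrices are represented as complex^'n^'n (n = CARD('n)).\<close>

definition mconj :: "complex^'n^'m \<Rightarrow> complex^'n^'m" where
  "mconj M = (\<chi> i j. cnj (M $ i $ j))"

definition adjoint_mat :: "complex^'n^'m \<Rightarrow> complex^'m^'n" where
  "adjoint_mat M = (\<chi> i j. cnj (M $ j $ i))"

definition hermitian_mat :: "complex^'n^'n \<Rightarrow> bool" where
  "hermitian_mat G \<longleftrightarrow> adjoint_mat G = G"

definition PT_symmetric :: "complex^'n^'n \<Rightarrow> bool" where
  "PT_symmetric H \<longleftrightarrow> (\<exists>P::complex^'n^'n. P ** P = mat 1 \<and> P ** mconj H - H ** P = 0)"

definition pseudo_hermitian :: "complex^'n^'n \<Rightarrow> bool" where
  "pseudo_hermitian H \<longleftrightarrow> (\<exists>G::complex^'n^'n. invertible G \<and> hermitian_mat G \<and>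
      adjoint_mat H ** G - G ** H = 0)"

end

theory Submission
  imports Defs "Jordan_Normal_Form.Jordan_Normal_Form_Existence"
begin

text \<open>From \<open>P\<^sup>2 = I\<close> the hypothesis gives \<open>conj H = P H P\<close>, hence
  \<open>H\<^sup>\<dagger> = P\<^sup>T H\<^sup>T P\<^sup>T\<close>. Every complex matrix is similar to its transpose (in Jordan form, the exchange
  matrix conjugates each Jordan block to its transpose), so \<open>H\<^sup>\<dagger> S = S H\<close> for some invertible
  \<open>S\<close>. Taking adjoints, also \<open>H\<^sup>\<dagger> S\<^sup>\<dagger> = S\<^sup>\<dagger> H\<close>, so for \<open>|c| = 1\<close> the Hermitian matrix
  \<open>G = c S + conj c S\<^sup>\<dagger>\<close> satisfies \<open>H\<^sup>\<dagger> G = G H\<close>. Since \<open>G = conj c S (S\<^sup>-\<^sup>1 S\<^sup>\<dagger> + c\<^sup>2 I)\<close>, it is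
  invertible unless \<open>-c\<^sup>2\<close> is one of the finitely many eigenvalues of \<open>S\<^sup>-\<^sup>1 S\<^sup>\<dagger>\<close>, and the unit
  circle is infinite.\<close>

no_notation Matrix.vec_index (infixl "$" 100)
hide_const (open) Matrix.mat

section \<open>Similarity of a complex matrix and its transpose\<close>

definition exchange_mat :: "nat \<Rightarrow> 'a::{zero,one} mat" where
  "exchange_mat n = Matrix.mat n n (\<lambda>(i, j). if i + j + 1 = n then 1 else 0)"

lemma exchange_mat_carrier [simp]: "exchange_mat n \<in> carrier_mat n n"
  by (simp add: exchange_mat_def)

lemma exchange_mat_mult:
  fixes B :: "'a::semiring_1 mat"
  assumes B: "B \<in> carrier_mat n m"
  shows "exchange_mat n * B = Matrix.mat n m (\<lambda>(i, j). B $$ (n - 1 - i, j))"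
proof (rule eq_matI)
  fix i j assume "i < dim_row (Matrix.mat n m (\<lambda>(i, j). B $$ (n - 1 - i, j)))"
    and "j < dim_col (Matrix.mat n m (\<lambda>(i, j). B $$ (n - 1 - i, j)))"
  then have i: "i < n" and j: "j < m" by auto
  have "(exchange_mat n * B) $$ (i, j) = (\<Sum>k\<in>{0..<n}. (if i + k + 1 = n then 1 else 0) * B $$ (k, j))"
    using i j B by (simp add: exchange_mat_def scalar_prod_def)
  also have "\<dots> = (\<Sum>k\<in>{0..<n}. if k = n - 1 - i then B $$ (k, j) else 0)"
    using i by (intro sum.cong) auto
  also have "\<dots> = B $$ (n - 1 - i, j)" using i by simp
  finally show "(exchange_mat n * B) $$ (i, j) = Matrix.mat n m (\<lambda>(i, j). B $$ (n - 1 - i, j)) $$ (i, j)"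
    using i j by simp
qed (use B in \<open>auto simp: exchange_mat_def\<close>)

lemma mult_exchange_mat:
  fixes B :: "'a::semiring_1 mat"
  assumes B: "B \<in> carrier_mat m n"
  shows "B * exchange_mat n = Matrix.mat m n (\<lambda>(i, j). B $$ (i, n - 1 - j))"
proof (rule eq_matI)
  fix i j assume "i < dim_row (Matrix.mat m n (\<lambda>(i, j). B $$ (i, n - 1 - j)))"
    and "j < dim_col (Matrix.mat m n (\<lambda>(i, j). B $$ (i, n - 1 - j)))"
  then have i: "i < m" and j: "j < n" by auto
  have "(B * exchange_mat n) $$ (i, j) = (\<Sum>k\<in>{0..<n}. B $$ (i, k) * (if k + j + 1 = n then 1 else 0))"
    using i j B by (simp add: exchange_mat_def scalar_prod_def)
  also have "\<dots> = (\<Sum>k\<in>{0..<n}. if k = n - 1 - j then B $$ (i, k) else 0)"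
    using j by (intro sum.cong) auto
  also have "\<dots> = B $$ (i, n - 1 - j)" using j by simp
  finally show "(B * exchange_mat n) $$ (i, j) = Matrix.mat m n (\<lambda>(i, j). B $$ (i, n - 1 - j)) $$ (i, j)"
    using i j by simp
qed (use B in \<open>auto simp: exchange_mat_def\<close>)

lemma exchange_mat_squared: "exchange_mat n * exchange_mat n = (1\<^sub>m n :: 'a::semiring_1 mat)"
  by (subst exchange_mat_mult[of _ n n]) (auto intro!: eq_matI simp: exchange_mat_def)

lemma transpose_jordan_block:
  fixes a :: "'a::semiring_1"
  shows "transpose_mat (jordan_block n a) = exchange_mat n * jordan_block n a * exchange_mat n"
  by (subst exchange_mat_mult[of _ n n], simp, subst mult_exchange_mat[of _ n n], simp)
    (rule eq_matI; auto)

lemma similar_mat_transpose: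
  fixes A B :: "'a::comm_ring_1 mat"
  assumes "similar_mat A B"
  shows "similar_mat (transpose_mat A) (transpose_mat B)"
proof -
  from similar_matD[OF assms] obtain n P Q where carrier: "{A, B, P, Q} \<subseteq> carrier_mat n n"
    and PQ: "P * Q = 1\<^sub>m n" and QP: "Q * P = 1\<^sub>m n" and A: "A = P * B * Q" by auto
  then have P: "P \<in> carrier_mat n n" and B: "B \<in> carrier_mat n n" and Q: "Q \<in> carrier_mat n n"
    by auto
  have "transpose_mat A = transpose_mat Q * (transpose_mat B * transpose_mat P)"
    unfolding A by (simp add: transpose_mult[OF mult_carrier_mat[OF P B] Q] transpose_mult[OF P B])
  also have "\<dots> = transpose_mat Q * transpose_mat B * transpose_mat P"
    using P B Q by (simp add: assoc_mult_mat)
  finally have "transpose_mat A = transpose_mat Q * transpose_mat B * transpose_mat P" .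
  moreover have "transpose_mat Q * transpose_mat P = 1\<^sub>m n"
    using transpose_mult[OF P Q] PQ by simp
  moreover have "transpose_mat P * transpose_mat Q = 1\<^sub>m n"
    using transpose_mult[OF Q P] QP by simp
  moreover have "{transpose_mat A, transpose_mat B, transpose_mat Q, transpose_mat P} \<subseteq> carrier_mat n n"
    using carrier by auto
  ultimately show ?thesis
    by (intro similar_matI[where P = "transpose_mat Q" and Q = "transpose_mat P"])
qed

lemma transpose_diag_block_mat:
  "transpose_mat (diag_block_mat As) = diag_block_mat (map transpose_mat As)"
proof (induct As)
  case (Cons A As)
  let ?D = "diag_block_mat As"
  have "transpose_mat (diag_block_mat (A # As)) =
      transpose_mat (four_block_mat A (0\<^sub>m (dim_row A) (dim_col ?D)) (0\<^sub>m (dim_row ?D) (dim_col A)) ?D)"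
    by (simp add: Let_def)
  also have "\<dots> = four_block_mat (transpose_mat A) (0\<^sub>m (dim_col A) (dim_row ?D))
      (0\<^sub>m (dim_col ?D) (dim_row A)) (transpose_mat ?D)"
    by (subst transpose_four_block_mat[of _ "dim_row A" "dim_col A" _ "dim_col ?D" _ "dim_row ?D"]) auto
  also have "\<dots> = diag_block_mat (map transpose_mat (A # As))"
    by (simp add: Let_def Cons[symmetric])
  finally show ?case .
qed simp

lemma similar_mat_transpose_jordan_matrix:
  "similar_mat (transpose_mat (jordan_matrix n_as)) (jordan_matrix (n_as :: (nat \<times> 'a::comm_ring_1) list))"
proof -
  let ?Ms = "map (\<lambda>(n, a). (transpose_mat (jordan_block n a), jordan_block n a)) n_as"
  have similar: "similar_mat (diag_block_mat (map fst ?Ms)) (diag_block_mat (map snd ?Ms))"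
  proof (rule similar_diag_mat_block_mat)
    fix A B assume "(A, B) \<in> set ?Ms"
    then obtain n a where A: "A = transpose_mat (jordan_block n a)" and B: "B = jordan_block n a"
      by auto
    show "similar_mat A B" unfolding A B transpose_jordan_block
      by (rule similar_matI[where n = n and P = "exchange_mat n" and Q = "exchange_mat n"])
        (auto simp: exchange_mat_squared intro!: mult_carrier_mat)
  qed
  have fst_Ms: "map fst ?Ms = map transpose_mat (map (\<lambda>(n, a). jordan_block n a) n_as)"
    by (induct n_as) auto
  have snd_Ms: "map snd ?Ms = map (\<lambda>(n, a). jordan_block n a) n_as"
    by (induct n_as) auto
  show ?thesis
    using similar unfolding jordan_matrix_def transpose_diag_block_mat fst_Ms snd_Ms .
qed

lemma similar_mat_transpose_self:
  fixes A :: "complex mat"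
  assumes A: "A \<in> carrier_mat n n"
  shows "similar_mat (transpose_mat A) A"
proof -
  obtain as where "char_poly A = (\<Prod>a\<leftarrow>as. [:- a, 1:])"
    using char_poly_factorized[OF A] by auto
  then obtain n_as where "jordan_nf A n_as"
    using jordan_nf_exists[OF A] by blast
  then have J: "similar_mat A (jordan_matrix n_as)"
    unfolding jordan_nf_def by auto
  show ?thesis
    using similar_mat_trans[OF similar_mat_trans[OF similar_mat_transpose[OF J]
        similar_mat_transpose_jordan_matrix] similar_mat_sym[OF J]] .
qed

lemma det_nonzero_imp_right_inverse:
  fixes X :: "'a::field mat"
  assumes X: "X \<in> carrier_mat n n" and det: "det X \<noteq> 0"
  shows "\<exists>K \<in> carrier_mat n n. X * K = 1\<^sub>m n"
proof
  let ?K = "(1 / det X) \<cdot>\<^sub>m adj_mat X"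
  show "?K \<in> carrier_mat n n" using adj_mat(1)[OF X] by simp
  have "X * ?K = (1 / det X) \<cdot>\<^sub>m (X * adj_mat X)"
    by (rule mult_smult_distrib[OF X adj_mat(1)[OF X]])
  also have "\<dots> = (1 / det X) \<cdot>\<^sub>m (det X \<cdot>\<^sub>m 1\<^sub>m n)"
    by (simp only: adj_mat(2)[OF X])
  also have "\<dots> = 1\<^sub>m n"
    using det by (intro eq_matI) auto
  finally show "X * ?K = 1\<^sub>m n" .
qed

lemma infinite_unit_circle: "infinite (sphere (0::complex) 1)"
proof
  assume finite: "finite (sphere (0::complex) 1)"
  have "connected (sphere (0::complex) 1)"
    by (rule connected_sphere) simp
  then have "sphere (0::complex) 1 = {} \<or> (\<exists>a. sphere (0::complex) 1 = {a})"
    using finite connected_finite_iff_sing by blast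
  moreover have "1 \<in> sphere (0::complex) 1" and "-1 \<in> sphere (0::complex) 1"
    by simp_all
  ultimately show False
    by (metis empty_iff singletonD one_neq_neg_one)
qed

lemma exists_unit_shift_det_nonzero:
  fixes N :: "complex mat"
  assumes N: "N \<in> carrier_mat n n"
  shows "\<exists>c. cmod c = 1 \<and> det (N + c\<^sup>2 \<cdot>\<^sub>m 1\<^sub>m n) \<noteq> 0"
proof -
  have "char_poly N \<noteq> 0"
    using degree_monic_char_poly[OF N] by auto
  then have "finite (uminus ` {z. poly (char_poly N) z = 0})"
    by (simp add: poly_roots_finite)
  then obtain z where z: "z \<in> sphere 0 1" "z \<notin> uminus ` {z. poly (char_poly N) z = 0}"
    using infinite_unit_circle by (meson ex_in_conv finite_subset subsetI)
  have "\<not> eigenvalue N (- z)"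
    using z(2) eigenvalue_root_char_poly[OF N] by (auto simp: image_iff)
  then have "det (char_matrix N (- z)) \<noteq> 0"
    using eigenvalue_det[OF N] by simp
  moreover have "char_matrix N (- z) = N + (csqrt z)\<^sup>2 \<cdot>\<^sub>m 1\<^sub>m n"
    unfolding char_matrix_def using N by simp
  moreover have "cmod (csqrt z) = 1"
    using z(1) by simp
  ultimately show ?thesis by metis
qed

text \<open>The spectral facts above live in the \<open>'a mat\<close> representation, whose indices are
  \<open>{0..<n}\<close>; \<open>mat_index\<close> fixes an enumeration of the finite index type \<open>'n\<close> to move between it
  and \<open>'a^'n^'n\<close>.\<close>

definition mat_index :: "nat \<Rightarrow> 'n::finite" where
  "mat_index = (SOME f. bij_betw f {0..<CARD('n)} UNIV)"

definition index_of :: "'n::finite \<Rightarrow> nat" where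
  "index_of = inv_into {0..<CARD('n)} mat_index"

lemma bij_betw_mat_index: "bij_betw (mat_index :: nat \<Rightarrow> 'n::finite) {0..<CARD('n)} UNIV"
  unfolding mat_index_def using someI_ex[OF ex_bij_betw_nat_finite[OF finite_class.finite_UNIV]] by simp

lemma index_of_less: "index_of (a :: 'n::finite) < CARD('n)"
  unfolding index_of_def
  by (metis UNIV_I atLeastLessThan_iff bij_betw_imp_surj_on bij_betw_mat_index inv_into_into)

lemma mat_index_index_of [simp]: "mat_index (index_of a) = a"
  unfolding index_of_def by (meson UNIV_I bij_betw_inv_into_right bij_betw_mat_index)

lemma index_of_mat_index [simp]: "i < CARD('n) \<Longrightarrow> index_of (mat_index i :: 'n::finite) = i"
  unfolding index_of_def
  by (rule inv_into_f_f) (use bij_betw_mat_index in \<open>auto simp: bij_betw_def\<close>)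

definition to_mat :: "'a^'n::finite^'n \<Rightarrow> 'a mat" where
  "to_mat M = Matrix.mat CARD('n) CARD('n) (\<lambda>(i, j). M $ mat_index i $ mat_index j)"

definition of_mat :: "'a mat \<Rightarrow> 'a^'n::finite^'n" where
  "of_mat A = (\<chi> a b. A $$ (index_of a, index_of b))"

lemma to_mat_carrier [simp]: "to_mat (M :: 'a^'n::finite^'n) \<in> carrier_mat CARD('n) CARD('n)"
  by (simp add: to_mat_def)

lemma to_mat_dim [simp]:
  "dim_row (to_mat (M :: 'a^'n::finite^'n)) = CARD('n)" "dim_col (to_mat (M :: 'a^'n::finite^'n)) = CARD('n)"
  by (simp_all add: to_mat_def)

lemma to_mat_index [simp]:
  "i < CARD('n) \<Longrightarrow> j < CARD('n) \<Longrightarrow>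
    to_mat (M :: 'a^'n::finite^'n) $$ (i, j) = M $ mat_index i $ mat_index j"
  by (simp add: to_mat_def)

lemma to_mat_inject:
  assumes "to_mat A = to_mat (B :: 'a^'n::finite^'n)"
  shows "A = B"
proof -
  have "A $ a $ b = B $ a $ b" for a b
    using arg_cong[OF assms, of "\<lambda>M. M $$ (index_of a, index_of b)"] by (simp add: index_of_less)
  then show ?thesis
    by (simp add: Finite_Cartesian_Product.vec_eq_iff)
qed

lemma to_mat_of_mat:
  "A \<in> carrier_mat CARD('n) CARD('n) \<Longrightarrow> to_mat (of_mat A :: 'a^'n::finite^'n) = A"
  by (rule eq_matI) (auto simp: of_mat_def)

lemma to_mat_mult: "to_mat (A ** B) = to_mat A * to_mat (B :: 'a::semiring_1^'n::finite^'n)"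
proof (rule eq_matI)
  fix i j assume "i < dim_row (to_mat A * to_mat B)" "j < dim_col (to_mat A * to_mat B)"
  then have i: "i < CARD('n)" and j: "j < CARD('n)" by auto
  have "(to_mat A * to_mat B) $$ (i, j)
      = (\<Sum>k\<in>{0..<CARD('n)}. A $ mat_index i $ mat_index k * B $ mat_index k $ mat_index j)"
    using i j by (simp add: scalar_prod_def)
  also have "\<dots> = (\<Sum>k\<in>UNIV. A $ mat_index i $ k * B $ k $ mat_index j)"
    by (rule sum.reindex_bij_betw[OF bij_betw_mat_index])
  also have "\<dots> = to_mat (A ** B) $$ (i, j)"
    using i j by (simp add: matrix_matrix_mult_def)
  finally show "to_mat (A ** B) $$ (i, j) = (to_mat A * to_mat B) $$ (i, j)" by simp
qed auto

lemma to_mat_mat: "to_mat (mat c :: 'a::semiring_1^'n::finite^'n) = c \<cdot>\<^sub>m 1\<^sub>m CARD('n)"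
proof (rule eq_matI)
  fix i j assume "i < dim_row (c \<cdot>\<^sub>m 1\<^sub>m CARD('n) :: 'a mat)"
    and "j < dim_col (c \<cdot>\<^sub>m 1\<^sub>m CARD('n) :: 'a mat)"
  then have i: "i < CARD('n)" and j: "j < CARD('n)" by auto
  then have "(mat_index i = (mat_index j :: 'n)) = (i = j)"
    by (metis index_of_mat_index)
  then show "to_mat (mat c :: 'a^'n^'n) $$ (i, j) = (c \<cdot>\<^sub>m 1\<^sub>m CARD('n)) $$ (i, j)"
    using i j by (simp add: Finite_Cartesian_Product.mat_def)
qed auto

lemma to_mat_one: "to_mat (mat 1 :: 'a::semiring_1^'n::finite^'n) = 1\<^sub>m CARD('n)"
  unfolding to_mat_mat by (rule eq_matI) auto

lemma to_mat_add: "to_mat (A + B) = to_mat A + to_mat (B :: 'a::plus^'n::finite^'n)"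
  by (rule eq_matI) auto

lemma to_mat_transpose: "to_mat (transpose A) = transpose_mat (to_mat (A :: 'a^'n::finite^'n))"
  by (rule eq_matI) (auto simp: transpose_def)

lemma transpose_similar:
  fixes H :: "complex^'n::finite^'n"
  shows "\<exists>Q. invertible Q \<and> transpose H ** Q = Q ** H"
proof -
  obtain n P Q where carrier: "{transpose_mat (to_mat H), to_mat H, P, Q} \<subseteq> carrier_mat n n"
    and PQ: "P * Q = 1\<^sub>m n" and QP: "Q * P = 1\<^sub>m n"
    and similar: "transpose_mat (to_mat H) = P * to_mat H * Q"
    using similar_matD[OF similar_mat_transpose_self[OF to_mat_carrier]] by blast
  have n: "n = CARD('n)"
    using carrier to_mat_carrier[of H] by auto
  have P: "P \<in> carrier_mat CARD('n) CARD('n)" and Q: "Q \<in> carrier_mat CARD('n) CARD('n)"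
    using carrier n by auto
  have "transpose_mat (to_mat H) * P = P * to_mat H * (Q * P)"
    unfolding similar using P Q by (simp add: assoc_mult_mat[of _ "CARD('n)" "CARD('n)"])
  also have "\<dots> = P * to_mat H"
    using P by (simp add: QP n)
  finally have "transpose H ** of_mat P = of_mat P ** H"
    by (intro to_mat_inject) (simp add: to_mat_mult to_mat_transpose to_mat_of_mat P)
  moreover have "of_mat P ** of_mat Q = (mat 1 :: complex^'n^'n)"
    by (intro to_mat_inject) (simp add: to_mat_mult to_mat_one to_mat_of_mat P Q PQ[unfolded n])
  ultimately show ?thesis
    using invertible_right_inverse by blast
qed

lemma exists_unit_shift_invertible:
  fixes M :: "complex^'n::finite^'n"
  shows "\<exists>c. cmod c = 1 \<and> invertible (M + mat (c\<^sup>2))"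
proof -
  obtain c where c: "cmod c = 1" and "det (to_mat M + c\<^sup>2 \<cdot>\<^sub>m 1\<^sub>m CARD('n)) \<noteq> 0"
    using exists_unit_shift_det_nonzero[OF to_mat_carrier] by blast
  then obtain K where K: "K \<in> carrier_mat CARD('n) CARD('n)"
    and "(to_mat M + c\<^sup>2 \<cdot>\<^sub>m 1\<^sub>m CARD('n)) * K = 1\<^sub>m CARD('n)"
    using det_nonzero_imp_right_inverse[of _ "CARD('n)"]
    by (meson add_carrier_mat one_carrier_mat smult_carrier_mat to_mat_carrier)
  then have "(M + mat (c\<^sup>2)) ** of_mat K = mat 1"
    by (intro to_mat_inject)
      (simp add: to_mat_mult to_mat_add to_mat_mat[of "c\<^sup>2"] to_mat_one to_mat_of_mat)
  then show ?thesis
    using c invertible_right_inverse by blast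
qed

section \<open>Pseudo-Hermiticity\<close>

lemma matrix_add_rdistrib: "(A + B) ** C = A ** C + B ** (C :: 'a::semiring_1^'p^'n)"
  by (simp add: Finite_Cartesian_Product.vec_eq_iff matrix_matrix_mult_def distrib_right sum.distrib)

lemma mat_mult_commute: "A ** mat c = mat c ** (A :: 'a::comm_semiring_1^'n^'m)"
  by (simp add: Finite_Cartesian_Product.vec_eq_iff matrix_matrix_mult_def
      Finite_Cartesian_Product.mat_def if_distrib if_distribR mult.commute cong: if_cong)

lemma mult_mat_left_commute: "A ** (mat c ** B) = mat c ** (A ** (B :: 'a::comm_semiring_1^'p^'n))"
  by (metis mat_mult_commute matrix_mul_assoc)

lemma mat_mult_eq_scale: "mat c ** A = (\<chi> i j. c * A $ i $ j :: 'a::semiring_1^'p^'n)"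
  by (simp add: Finite_Cartesian_Product.vec_eq_iff matrix_matrix_mult_def
      Finite_Cartesian_Product.mat_def if_distrib if_distribR cong: if_cong)

lemma mat_mult_mat: "mat c ** mat d = (mat (c * d) :: 'a::semiring_1^'n^'n)"
  unfolding mat_mult_eq_scale
  by (simp add: Finite_Cartesian_Product.vec_eq_iff Finite_Cartesian_Product.mat_def)

lemma invertible_mat: "c \<noteq> 0 \<Longrightarrow> invertible (mat c :: 'a::field^'n^'n)"
  unfolding invertible_right_inverse by (auto intro!: exI[of _ "mat (inverse c)"] simp: mat_mult_mat)

lemma adjoint_mat_mult: "adjoint_mat (A ** B) = adjoint_mat B ** adjoint_mat A"
  by (simp add: Finite_Cartesian_Product.vec_eq_iff adjoint_mat_def matrix_matrix_mult_def
      cnj_sum mult.commute)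

lemma adjoint_mat_adjoint_mat [simp]: "adjoint_mat (adjoint_mat A) = A"
  by (simp add: Finite_Cartesian_Product.vec_eq_iff adjoint_mat_def)

lemma adjoint_mat_add: "adjoint_mat (A + B) = adjoint_mat A + adjoint_mat B"
  by (simp add: Finite_Cartesian_Product.vec_eq_iff adjoint_mat_def)

lemma adjoint_mat_mat [simp]: "adjoint_mat (mat c) = mat (cnj c)"
  by (simp add: Finite_Cartesian_Product.vec_eq_iff adjoint_mat_def Finite_Cartesian_Product.mat_def)

lemma adjoint_mat_eq_transpose_mconj: "adjoint_mat A = transpose (mconj A)"
  by (simp add: Finite_Cartesian_Product.vec_eq_iff adjoint_mat_def mconj_def transpose_def)

lemma pseudo_hermitian_if_similar_to_adjoint:
  fixes H S :: "complex^'n^'n"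
  assumes "invertible S" and HS: "adjoint_mat H ** S = S ** H"
  shows "pseudo_hermitian H"
proof -
  obtain S' where SS': "S ** S' = mat 1"
    using assms(1) invertible_def by blast
  obtain c where "cmod c = 1" and shift: "invertible (S' ** adjoint_mat S + mat (c\<^sup>2))"
    using exists_unit_shift_invertible by blast
  then have "cnj c * c = 1"
    using complex_norm_square[of c] by (simp add: mult.commute)
  then have "cnj c \<noteq> 0" and cnj_c_square: "cnj c * c\<^sup>2 = c"
    by (auto simp: power2_eq_square mult.assoc[symmetric])
  define G where "G = mat c ** S + mat (cnj c) ** adjoint_mat S"
  have "(mat (cnj c) ** S) ** (S' ** adjoint_mat S + mat (c\<^sup>2))
      = mat (cnj c) ** ((S ** S') ** adjoint_mat S) + mat (cnj c) ** (S ** mat (c\<^sup>2))"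
    by (simp add: matrix_add_ldistrib matrix_mul_assoc[symmetric])
  also have "\<dots> = mat (cnj c) ** adjoint_mat S + mat (cnj c * c\<^sup>2) ** S"
    by (simp add: SS' mat_mult_commute[of S] matrix_mul_assoc mat_mult_mat)
  also have "\<dots> = G"
    by (simp add: G_def cnj_c_square add.commute)
  moreover have "invertible ((mat (cnj c) ** S) ** (S' ** adjoint_mat S + mat (c\<^sup>2)))"
    using \<open>cnj c \<noteq> 0\<close> by (intro invertible_mult invertible_mat assms(1) shift)
  ultimately have "invertible G"
    by simp
  moreover have "hermitian_mat G"
    by (simp add: hermitian_mat_def G_def adjoint_mat_add adjoint_mat_mult add.commute
        mat_mult_commute[of S] mat_mult_commute[of "adjoint_mat S"])
  moreover have "adjoint_mat H ** G = G ** H"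
  proof -
    have "adjoint_mat S ** H = adjoint_mat H ** adjoint_mat S"
      using arg_cong[OF HS, of adjoint_mat] by (simp add: adjoint_mat_mult)
    then show ?thesis
      by (simp add: G_def matrix_add_ldistrib matrix_add_rdistrib matrix_mul_assoc[symmetric]
          mult_mat_left_commute HS)
  qed
  ultimately show ?thesis
    unfolding pseudo_hermitian_def by auto
qed

lemma adjoint_mat_of_PT_symmetry:
  fixes H P :: "complex^'n^'n"
  assumes PP: "P ** P = mat 1" and PH: "P ** mconj H = H ** P"
  shows "adjoint_mat H = transpose P ** transpose H ** transpose P"
proof -
  have "mconj H = P ** (P ** mconj H)"
    by (simp add: matrix_mul_assoc PP)
  then have "mconj H = P ** H ** P"
    by (simp add: PH matrix_mul_assoc)
  then show ?thesis
    by (simp add: adjoint_mat_eq_transpose_mconj matrix_transpose_mul matrix_mul_assoc)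
qed

theorem theorem3:
  fixes H :: "complex^'n^'n"
  assumes "PT_symmetric H"
  shows "pseudo_hermitian H"
proof -
  obtain P where PP: "P ** P = mat 1" and PH: "P ** mconj H = H ** P"
    using assms unfolding PT_symmetric_def by auto
  define T where "T = transpose P"
  have "T ** T = mat 1"
    by (simp add: T_def matrix_transpose_mul[symmetric] PP)
  then have TTX: "T ** (T ** X) = X" for X :: "complex^'n^'n"
    by (simp add: matrix_mul_assoc)
  obtain Q where "invertible Q" and HQ: "transpose H ** Q = Q ** H"
    using transpose_similar by blast
  with \<open>T ** T = mat 1\<close> have "invertible (T ** Q)"
    using invertible_mult invertible_right_inverse by blast
  moreover have "adjoint_mat H ** (T ** Q) = T ** (transpose H ** Q)"
    using adjoint_mat_of_PT_symmetry[OF PP PH]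
    by (simp add: T_def[symmetric] matrix_mul_assoc[symmetric] TTX)
  then have "adjoint_mat H ** (T ** Q) = (T ** Q) ** H"
    by (simp add: HQ matrix_mul_assoc)
  ultimately show ?thesis
    by (rule pseudo_hermitian_if_similar_to_adjoint)
qed

end
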